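(* Let $X$ be a Polish space and $n\in\mathbb{N}$. The map $\tau\mapsto\tau^*$ from $\mathcal{M}(X^{(n)})$ to $\mathcal{M}(X)$ is continuous.
   Context: $X^{(n)}$ is the quotient of $X^n$ by permutations of coordinates with the quotient topology, identified with the set of multisets $m:X\to\mathbb{N}$ of cardinality $n$. $\mathcal{M}(Z)$ denotes the finite Borel measures on $Z$ with the weak topology (generated by $\tau\mapsto\int f\,d\tau$ for bounded continuous $f$). For $\tau\in\mathcal{M}(X^{(n)})$, $\tau^*$ is the Borel measure on $X$ defined by $\tau^*(E)=\sum_{i=1}^n\tau\big(s^{-1}(\pi_i^{-1}(E))\big)$, where $s:X^{(n)}\to X^n$ is a universally measurable map with $q\circ s=\mathrm{id}$ ($q$ the quotient map) and $\pi_i:X^n\to X$ the $i$-th projection; equivalently $\tau^*(E)=\int\sum_{x\in E}m(x)\,d\tau(m)$. *)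

theory Defs
  imports "HOL-Analysis.Analysis" "HOL-Library.Multiset"
begin

definition borel_of :: "'a topology \<Rightarrow> 'a measure" where
  "borel_of T = sigma (topspace T) {U. openin T U}"

definition mset_of_tuple :: "nat \<Rightarrow> (nat \<Rightarrow> 'a) \<Rightarrow> 'a multiset" where
  "mset_of_tuple n x = mset (map x [0..<n])"

text \<open>The symmetric power X^(n): the multisets of cardinality n, carrying the
  quotient topology of the product topology on X^n under mset_of_tuple.\<close>
definition sym_power_topology :: "'a topology \<Rightarrow> nat \<Rightarrow> 'a multiset topology" where
  "sym_power_topology X n = topology (\<lambda>U.
     U \<subseteq> mset_of_tuple n ` topspace (product_topology (\<lambda>_. X) {..<n}) \<and>
     openin (product_topology (\<lambda>_. X) {..<n})
       {x \<in> topspace (product_topology (\<lambda>_. X) {..<n}). mset_of_tuple n x \<in> U})"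

definition finite_borel_measures :: "'a topology \<Rightarrow> 'a measure set" where
  "finite_borel_measures T =
     {M. finite_measure M \<and> space M = topspace T \<and> sets M = sets (borel_of T)}"

definition weak_measure_topology :: "'a topology \<Rightarrow> 'a measure topology" where
  "weak_measure_topology T = topology_generated_by
     {{M \<in> finite_borel_measures T. integral\<^sup>L M f \<in> U} | f U.
        continuous_map T euclideanreal f \<and> bounded (f ` topspace T) \<and> open U}"

definition intensity_measure :: "'a multiset measure \<Rightarrow> ('a::topological_space) measure" where
  "intensity_measure \<tau> = measure_of (topspace (euclidean::'a topology))
     (sets (borel_of (euclidean::'a topology)))
     (\<lambda>E. \<integral>\<^sup>+ m. ennreal (real (size (filter_mset (\<lambda>x. x \<in> E) m))) \<partial>\<tau>)"

end

theory Submission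
  imports Defs "HOL-Probability.Probability"
begin

text \<open>Let \<open>\<nu> m\<close> be the empirical measure of a multiset \<open>m\<close>, the uniform distribution
  on its points counted with multiplicity. On multisets of size \<open>n\<close> the intensity measure
  is the mixture \<open>\<tau>\<^sup>* = n \<cdot> (\<tau> \<bind> \<nu>)\<close>; the kernel \<open>\<nu>\<close> is measurable because
  \<open>m \<mapsto> size {#x \<in># m. x \<in> E#}\<close> is lower semicontinuous for open \<open>E\<close>. Hence
  \<open>\<integral> f d\<tau>\<^sup>* = \<integral> (\<Sum>x\<in>#m. f x) d\<tau>(m)\<close> for bounded continuous \<open>f\<close>, and
  \<open>m \<mapsto> \<Sum>x\<in>#m. f x\<close> is bounded and continuous on the symmetric power, being induced
  through the quotient map by \<open>t \<mapsto> \<Sum>i<n. f (t i)\<close>. So \<open>\<tau> \<mapsto> \<tau>\<^sup>*\<close> pulls subbasic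
  open sets of the weak topology back to subbasic open sets.\<close>

section \<open>Quotient topologies and the symmetric power\<close>

definition quotient_topology :: "'a topology \<Rightarrow> ('a \<Rightarrow> 'b) \<Rightarrow> 'b topology" where
  "quotient_topology X f =
     topology (\<lambda>U. U \<subseteq> f ` topspace X \<and> openin X {x \<in> topspace X. f x \<in> U})"

lemma istopology_quotient:
  "istopology (\<lambda>U. U \<subseteq> f ` topspace X \<and> openin X {x \<in> topspace X. f x \<in> U})"
  unfolding istopology_def
proof (intro conjI allI impI ballI)
  fix S T
  assume S: "S \<subseteq> f ` topspace X \<and> openin X {x \<in> topspace X. f x \<in> S}"
    and T: "T \<subseteq> f ` topspace X \<and> openin X {x \<in> topspace X. f x \<in> T}"
  then show "S \<inter> T \<subseteq> f ` topspace X" by blast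
  have "{x \<in> topspace X. f x \<in> S \<inter> T} =
      {x \<in> topspace X. f x \<in> S} \<inter> {x \<in> topspace X. f x \<in> T}"
    by blast
  with S T show "openin X {x \<in> topspace X. f x \<in> S \<inter> T}" by auto
next
  fix \<K>
  assume \<K>: "\<forall>S\<in>\<K>. S \<subseteq> f ` topspace X \<and> openin X {x \<in> topspace X. f x \<in> S}"
  then show "\<Union>\<K> \<subseteq> f ` topspace X" by blast
  have "{x \<in> topspace X. f x \<in> \<Union>\<K>} = (\<Union>S\<in>\<K>. {x \<in> topspace X. f x \<in> S})"
    by blast
  with \<K> show "openin X {x \<in> topspace X. f x \<in> \<Union>\<K>}" by auto
qed

lemma openin_quotient_topology:
  "openin (quotient_topology X f) U \<longleftrightarrow>
     U \<subseteq> f ` topspace X \<and> openin X {x \<in> topspace X. f x \<in> U}"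
  unfolding quotient_topology_def topology_inverse'[OF istopology_quotient] by (rule refl)

lemma topspace_quotient_topology: "topspace (quotient_topology X f) = f ` topspace X"
proof (rule antisym)
  show "topspace (quotient_topology X f) \<subseteq> f ` topspace X"
    using openin_topspace[of "quotient_topology X f"]
    unfolding openin_quotient_topology by (rule conjunct1)
  have "{x \<in> topspace X. f x \<in> f ` topspace X} = topspace X" by blast
  then have "openin (quotient_topology X f) (f ` topspace X)"
    by (simp add: openin_quotient_topology)
  then show "f ` topspace X \<subseteq> topspace (quotient_topology X f)"
    by (rule openin_subset)
qed

lemma quotient_map_quotient_topology: "quotient_map X (quotient_topology X f) f"
  unfolding quotient_map_def topspace_quotient_topology openin_quotient_topology by blast

lemma sym_power_topology_eq_quotient_topology:
  "sym_power_topology X n = quotient_topology (product_topology (\<lambda>_. X) {..<n}) (mset_of_tuple n)"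
  unfolding sym_power_topology_def quotient_topology_def by (rule refl)

lemma quotient_map_mset_of_tuple:
  "quotient_map (product_topology (\<lambda>_. X) {..<n}) (sym_power_topology X n) (mset_of_tuple n)"
  unfolding sym_power_topology_eq_quotient_topology by (rule quotient_map_quotient_topology)

lemma topspace_sym_power_topology:
  "topspace (sym_power_topology X n) = {m. size m = n \<and> set_mset m \<subseteq> topspace X}"
proof -
  have "mset_of_tuple n ` (PiE {..<n} (\<lambda>_. topspace X)) = {m. size m = n \<and> set_mset m \<subseteq> topspace X}"
  proof (intro equalityI subsetI)
    fix m assume "m \<in> mset_of_tuple n ` (PiE {..<n} (\<lambda>_. topspace X))"
    then obtain x where x: "x \<in> PiE {..<n} (\<lambda>_. topspace X)" and m: "m = mset (map x [0..<n])"
      unfolding mset_of_tuple_def by blast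
    have "set_mset m \<subseteq> topspace X"
      using PiE_mem[OF x] by (auto simp: m)
    with m show "m \<in> {m. size m = n \<and> set_mset m \<subseteq> topspace X}"
      by simp
  next
    fix m assume m: "m \<in> {m. size m = n \<and> set_mset m \<subseteq> topspace X}"
    obtain xs where xs: "mset xs = m" using ex_mset by blast
    with m have len: "length xs = n" by auto
    then have "map (restrict (nth xs) {..<n}) [0..<n] = xs"
      by (auto intro: nth_equalityI)
    then have "mset_of_tuple n (restrict (nth xs) {..<n}) = m"
      using xs by (simp add: mset_of_tuple_def)
    moreover have "restrict (nth xs) {..<n} \<in> PiE {..<n} (\<lambda>_. topspace X)"
      using m xs len by (auto simp: PiE_iff)
    ultimately show "m \<in> mset_of_tuple n ` (PiE {..<n} (\<lambda>_. topspace X))"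
      by blast
  qed
  then show ?thesis
    by (simp only: sym_power_topology_eq_quotient_topology topspace_quotient_topology
        topspace_product_topology)
qed

lemma size_filter_mset_of_tuple:
  "size (filter_mset P (mset_of_tuple n t)) = card {i. i < n \<and> P (t i)}"
proof -
  have "size (filter_mset P (mset_of_tuple n t)) = length (filter P (map t [0..<n]))"
    unfolding mset_of_tuple_def by (simp only: mset_filter[symmetric] size_mset)
  also have "\<dots> = card {i. i < n \<and> P (t i)}"
    unfolding length_filter_conv_card by (rule arg_cong[where f = card]) auto
  finally show ?thesis .
qed

lemma sum_mset_mset_of_tuple: "(\<Sum>x\<in>#mset_of_tuple n t. f x) = (\<Sum>i<n. f (t i))"
  by (simp add: mset_of_tuple_def atLeast0LessThan sum_unfold_sum_mset multiset.map_comp o_def)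

lemma openin_sym_power_topology_count_greater:
  assumes E: "openin X E"
  shows "openin (sym_power_topology X n)
           {m \<in> topspace (sym_power_topology X n). a < real (size (filter_mset (\<lambda>x. x \<in> E) m))}"
    (is "openin ?Y ?U")
proof -
  let ?P = "product_topology (\<lambda>_. X) {..<n}"
  let ?cyl = "\<lambda>I. PiE {..<n} (\<lambda>i. if i \<in> I then E else topspace X)"
  have q: "quotient_map ?P ?Y (mset_of_tuple n)"
    by (rule quotient_map_mset_of_tuple)
  have "{t \<in> topspace ?P. mset_of_tuple n t \<in> ?U} = (\<Union>I \<in> {I. a < real (card I) \<and> I \<subseteq> {..<n}}. ?cyl I)"
  proof (intro equalityI subsetI)
    fix t assume "t \<in> {t \<in> topspace ?P. mset_of_tuple n t \<in> ?U}"
    then have t: "t \<in> topspace ?P" and card: "a < real (card {i. i < n \<and> t i \<in> E})"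
      by (auto simp: size_filter_mset_of_tuple)
    have "t \<in> ?cyl {i. i < n \<and> t i \<in> E}"
      using t by (auto simp: PiE_iff)
    with card show "t \<in> (\<Union>I \<in> {I. a < real (card I) \<and> I \<subseteq> {..<n}}. ?cyl I)"
      by blast
  next
    fix t assume "t \<in> (\<Union>I \<in> {I. a < real (card I) \<and> I \<subseteq> {..<n}}. ?cyl I)"
    then obtain I where card: "a < real (card I)" and I: "I \<subseteq> {..<n}" and t: "t \<in> ?cyl I"
      by blast
    have t_top: "t \<in> topspace ?P"
      using t openin_subset[OF E] by (auto simp: PiE_iff split: if_splits)
    have "t i \<in> E" if "i \<in> I" for i
    proof -
      have "i \<in> {..<n}" using I that by blast
      with that show ?thesis using PiE_mem[OF t] by fastforce
    qed
    with I have "I \<subseteq> {i. i < n \<and> t i \<in> E}"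
      by auto
    then have "card I \<le> card {i. i < n \<and> t i \<in> E}"
      by (intro card_mono) auto
    moreover have "mset_of_tuple n t \<in> topspace ?Y"
      using q t_top quotient_imp_surjective_map by blast
    ultimately show "t \<in> {t \<in> topspace ?P. mset_of_tuple n t \<in> ?U}"
      using t_top card by (auto simp: size_filter_mset_of_tuple)
  qed
  moreover have "openin ?P (?cyl I)" for I
    using E by (simp add: openin_PiE)
  ultimately have "openin ?P {t \<in> topspace ?P. mset_of_tuple n t \<in> ?U}"
    by auto
  moreover have "?U \<subseteq> topspace ?Y"
    by blast
  ultimately show ?thesis
    using q[unfolded quotient_map_def, THEN conjunct2, rule_format, of ?U] by simp
qed

lemma continuous_map_sym_power_topology_sum_mset:
  fixes f :: "'a \<Rightarrow> 'b::real_normed_vector"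
  assumes f: "continuous_map X euclidean f"
  shows "continuous_map (sym_power_topology X n) euclidean (\<lambda>m. \<Sum>x\<in>#m. f x)"
proof (rule continuous_compose_quotient_map[OF quotient_map_mset_of_tuple])
  have "continuous_map (product_topology (\<lambda>_. X) {..<n}) euclidean (\<lambda>t. f (t i))" if "i < n" for i
    using continuous_map_compose[OF continuous_map_product_projection[of i "{..<n}" "\<lambda>_. X"] f] that
    by (simp add: o_def)
  then have "continuous_map (product_topology (\<lambda>_. X) {..<n}) euclidean (\<lambda>t. \<Sum>i<n. f (t i))"
    by (intro continuous_map_sum) auto
  then show "continuous_map (product_topology (\<lambda>_. X) {..<n}) euclidean
      ((\<lambda>m. \<Sum>x\<in>#m. f x) \<circ> mset_of_tuple n)"
    by (simp add: o_def sum_mset_mset_of_tuple)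
qed

lemma norm_sum_mset_le:
  fixes f :: "'a \<Rightarrow> 'b::real_normed_vector"
  assumes "\<And>x. x \<in># m \<Longrightarrow> norm (f x) \<le> B"
  shows "norm (\<Sum>x\<in>#m. f x) \<le> real (size m) * B"
  using assms
proof (induction m)
  case (add y m)
  have "norm (\<Sum>x\<in>#add_mset y m. f x) \<le> norm (f y) + norm (\<Sum>x\<in>#m. f x)"
    by (simp add: norm_triangle_ineq)
  also have "\<dots> \<le> B + real (size m) * B"
    using add by (intro add_mono) auto
  finally show ?case
    by (simp add: algebra_simps)
qed simp

lemma bounded_sym_power_topology_sum_mset:
  fixes f :: "'a \<Rightarrow> 'b::real_normed_vector"
  assumes "bounded (f ` topspace X)"
  shows "bounded ((\<lambda>m. \<Sum>x\<in>#m. f x) ` topspace (sym_power_topology X n))"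
proof -
  obtain B where B: "\<And>x. x \<in> topspace X \<Longrightarrow> norm (f x) \<le> B"
    using assms by (auto simp: bounded_iff)
  have "norm (\<Sum>x\<in>#m. f x) \<le> real n * B" if "m \<in> topspace (sym_power_topology X n)" for m
    using that norm_sum_mset_le[of m f B] B by (auto simp: topspace_sym_power_topology)
  then show ?thesis
    by (auto simp: bounded_iff)
qed

section \<open>Borel sets of a topology\<close>

lemma space_borel_of: "space (borel_of T) = topspace T"
  unfolding borel_of_def by (rule space_measure_of) (auto dest: openin_subset)

lemma sets_borel_of: "sets (borel_of T) = sigma_sets (topspace T) {U. openin T U}"
  unfolding borel_of_def by (rule sets_measure_of) (auto dest: openin_subset)

lemma openin_in_sets_borel_of: "openin T U \<Longrightarrow> U \<in> sets (borel_of T)"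
  unfolding sets_borel_of by (rule sigma_sets.Basic) simp

lemma borel_of_euclidean: "borel_of euclidean = borel"
  unfolding borel_of_def borel_def by simp

lemma continuous_map_imp_borel_measurable:
  fixes g :: "'a \<Rightarrow> 'b::topological_space"
  assumes "continuous_map T euclidean g"
  shows "g \<in> borel_measurable (borel_of T)"
proof (rule borel_measurableI)
  fix S :: "'b set" assume "open S"
  then have "openin T {x \<in> topspace T. g x \<in> S}"
    using assms by (simp add: continuous_map_def)
  moreover have "{x \<in> topspace T. g x \<in> S} = g -` S \<inter> space (borel_of T)"
    by (auto simp: space_borel_of)
  ultimately show "g -` S \<inter> space (borel_of T) \<in> sets (borel_of T)"
    by (metis openin_in_sets_borel_of)
qed

lemma borel_measurable_sym_power_topology_count:
  assumes "openin X E"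
  shows "(\<lambda>m. real (size (filter_mset (\<lambda>x. x \<in> E) m)))
           \<in> borel_measurable (borel_of (sym_power_topology X n))"
proof (rule borel_measurableI_greater)
  fix a :: real
  show "{m \<in> space (borel_of (sym_power_topology X n)). a < real (size (filter_mset (\<lambda>x. x \<in> E) m))}
      \<in> sets (borel_of (sym_power_topology X n))"
    unfolding space_borel_of
    by (rule openin_in_sets_borel_of[OF openin_sym_power_topology_count_greater[OF assms]])
qed

section \<open>Empirical measures and the intensity measure\<close>

lemma sum_mset_eq_sum_count:
  fixes f :: "'a \<Rightarrow> 'b::comm_semiring_1"
  assumes A: "finite A" and M: "set_mset M \<subseteq> A"
  shows "(\<Sum>x\<in>#M. f x) = (\<Sum>x\<in>A. of_nat (count M x) * f x)"
  using M
proof (induction M)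
  case (add y M)
  have "(\<Sum>x\<in>A. of_nat (count (add_mset y M) x) * f x) =
      (\<Sum>x\<in>A. of_nat (count M x) * f x + (if x = y then f x else 0))"
    by (rule sum.cong) (auto simp: algebra_simps)
  also have "\<dots> = (\<Sum>x\<in>A. of_nat (count M x) * f x) + f y"
    using add.prems A by (simp add: sum.distrib)
  finally show ?case
    using add by (simp add: add.commute)
qed simp

text \<open>\<open>pmf_of_multiset {#}\<close> is unspecified; wherever \<open>m = {#}\<close> can occur below,
  \<open>empirical_measure m\<close> appears multiplied by \<open>size m = 0\<close>.\<close>

definition empirical_measure :: "'a multiset \<Rightarrow> 'a::topological_space measure" where
  "empirical_measure m = distr (measure_pmf (pmf_of_multiset m)) borel id"

lemma measurable_id_measure_pmf_borel: "id \<in> measurable (measure_pmf p) borel"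
  by (simp add: measurable_def)

lemma prob_space_empirical_measure: "prob_space (empirical_measure m)"
  unfolding empirical_measure_def
  by (rule measure_pmf.prob_space_distr[OF measurable_id_measure_pmf_borel])

lemma sets_empirical_measure [simp]: "sets (empirical_measure m) = sets borel"
  by (simp add: empirical_measure_def)

lemma space_empirical_measure [simp]: "space (empirical_measure m) = UNIV"
  by (simp add: empirical_measure_def)

lemma integral_empirical_measure:
  fixes f :: "'a::topological_space \<Rightarrow> real"
  assumes f: "f \<in> borel_measurable borel" and m: "m \<noteq> {#}"
  shows "integral\<^sup>L (empirical_measure m) f = (\<Sum>x\<in>#m. f x) / real (size m)"
proof -
  have "integral\<^sup>L (empirical_measure m) f = integral\<^sup>L (measure_pmf (pmf_of_multiset m)) f"
    unfolding empirical_measure_def by (simp add: integral_distr[OF measurable_id_measure_pmf_borel f])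
  also have "\<dots> = (\<Sum>x\<in>set_mset m. f x * pmf (pmf_of_multiset m) x)"
    by (rule integral_measure_pmf_real) (use m in auto)
  also have "\<dots> = (\<Sum>x\<in>set_mset m. real (count m x) * f x) / real (size m)"
    using m by (simp add: sum_divide_distrib mult.commute)
  also have "\<dots> = (\<Sum>x\<in>#m. f x) / real (size m)"
    by (simp add: sum_mset_eq_sum_count[of "set_mset m"])
  finally show ?thesis .
qed

lemma sum_mset_indicator: "(\<Sum>x\<in>#m. indicator E x :: real) = real (size (filter_mset (\<lambda>x. x \<in> E) m))"
  by (induction m) auto

lemma emeasure_empirical_measure:
  fixes E :: "'a::topological_space set"
  assumes E: "E \<in> sets borel" and m: "m \<noteq> {#}"
  shows "emeasure (empirical_measure m) E = ennreal (real (size (filter_mset (\<lambda>x. x \<in> E) m)) / real (size m))"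
proof -
  interpret prob_space "empirical_measure m"
    by (rule prob_space_empirical_measure)
  have "integral\<^sup>L (empirical_measure m) (indicator E) = real (size (filter_mset (\<lambda>x. x \<in> E) m)) / real (size m)"
    by (subst integral_empirical_measure) (use E m in \<open>auto simp: sum_mset_indicator\<close>)
  then show ?thesis
    using E by (simp add: emeasure_eq_measure)
qed

lemma measurable_empirical_measure:
  "empirical_measure \<in> measurable (borel_of (sym_power_topology (euclidean :: 'a::topological_space topology) n)) (subprob_algebra borel)"
proof (rule measurable_subprob_algebra_generated[OF sets_borel])
  show "Int_stable {S :: 'a set. open S}"
    by (auto simp: Int_stable_def)
  show "subprob_space (empirical_measure m)" for m :: "'a multiset"
    by (rule prob_space_imp_subprob_space[OF prob_space_empirical_measure])
  have "emeasure (empirical_measure m) UNIV = 1" for m :: "'a multiset"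
    using prob_space.emeasure_space_1[OF prob_space_empirical_measure[of m]] by simp
  then show "(\<lambda>m. emeasure (empirical_measure m) UNIV)
      \<in> borel_measurable (borel_of (sym_power_topology (euclidean :: 'a topology) n))"
    by simp
next
  fix A :: "'a set" assume "A \<in> {S. open S}"
  then have A: "open A" by simp
  show "(\<lambda>m. emeasure (empirical_measure m) A) \<in> borel_measurable (borel_of (sym_power_topology euclidean n))"
  proof (cases "n = 0")
    case True
    then have "emeasure (empirical_measure m) A = emeasure (empirical_measure {#}) A"
      if "m \<in> space (borel_of (sym_power_topology (euclidean :: 'a topology) n))" for m
      using that by (simp add: space_borel_of topspace_sym_power_topology)
    then show ?thesis
      by (subst measurable_cong) auto
  next
    case False
    have "emeasure (empirical_measure m) A = ennreal (real (size (filter_mset (\<lambda>x. x \<in> A) m)) / real n)"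
      if "m \<in> space (borel_of (sym_power_topology (euclidean :: 'a topology) n))" for m
      using that False A by (subst emeasure_empirical_measure) (auto simp: space_borel_of topspace_sym_power_topology)
    moreover have [measurable]: "(\<lambda>m. real (size (filter_mset (\<lambda>x. x \<in> A) m)))
        \<in> borel_measurable (borel_of (sym_power_topology (euclidean :: 'a topology) n))"
      using A by (intro borel_measurable_sym_power_topology_count) simp
    ultimately show ?thesis
      by (subst measurable_cong) auto
  qed
qed auto

lemma integral_scale_measure:
  fixes f :: "'a \<Rightarrow> real"
  assumes "f \<in> borel_measurable M" and "0 \<le> r"
  shows "integral\<^sup>L (scale_measure (ennreal r) M) f = r * integral\<^sup>L M f"
proof -
  have "scale_measure (ennreal r) M = density M (\<lambda>_. ennreal r)"
    by (rule measure_eqI) (auto simp: emeasure_density_const)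
  then show ?thesis
    using assms by (simp add: integral_density)
qed

lemma finite_measure_bind:
  assumes M: "finite_measure M" and N: "N \<in> measurable M (subprob_algebra S)"
  shows "finite_measure (M \<bind> N)"
proof (cases "space M = {}")
  case True
  then show ?thesis
    by (simp add: bind_empty finite_measure_count_space)
next
  case False
  have "emeasure (M \<bind> N) (space (M \<bind> N)) = (\<integral>\<^sup>+x. emeasure (N x) (space S) \<partial>M)"
    by (simp add: space_bind_measurable[OF N False] emeasure_bind[OF False N])
  also have "\<dots> \<le> (\<integral>\<^sup>+x. 1 \<partial>M)"
    using subprob_space_kernel[OF N] subprob_measurableD(1)[OF N]
    by (intro nn_integral_mono) (metis subprob_space.emeasure_space_le_1)
  also have "\<dots> < \<infinity>"
    using finite_measure.emeasure_finite[OF M] by (simp add: less_top)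
  finally show ?thesis
    by (intro finite_measureI) simp
qed

lemma size_mult_emeasure_empirical_measure:
  fixes E :: "'a::topological_space set"
  assumes "E \<in> sets borel"
  shows "ennreal (real (size m)) * emeasure (empirical_measure m) E
           = ennreal (real (size (filter_mset (\<lambda>x. x \<in> E) m)))"
proof (cases "m = {#}")
  case False
  then show ?thesis
    using assms by (simp add: emeasure_empirical_measure ennreal_mult[symmetric])
qed simp

lemma size_mult_integral_empirical_measure:
  fixes f :: "'a::topological_space \<Rightarrow> real"
  assumes "f \<in> borel_measurable borel"
  shows "real (size m) * integral\<^sup>L (empirical_measure m) f = (\<Sum>x\<in>#m. f x)"
proof (cases "m = {#}")
  case False
  then show ?thesis
    using assms by (simp add: integral_empirical_measure)
qed simp

lemma intensity_measure_eq_scale_bind: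
  fixes \<tau> :: "'a::topological_space multiset measure"
  assumes K: "empirical_measure \<in> measurable \<tau> (subprob_algebra borel)"
    and size: "\<And>m. m \<in> space \<tau> \<Longrightarrow> size m = n" and ne: "space \<tau> \<noteq> {}"
  shows "intensity_measure \<tau> = scale_measure (ennreal (real n)) (\<tau> \<bind> empirical_measure)"
    (is "_ = ?B")
proof -
  have count: "emeasure ?B E = (\<integral>\<^sup>+m. ennreal (real (size (filter_mset (\<lambda>x. x \<in> E) m))) \<partial>\<tau>)"
    if E: "E \<in> sets borel" for E
  proof -
    have "emeasure ?B E = ennreal (real n) * (\<integral>\<^sup>+m. emeasure (empirical_measure m) E \<partial>\<tau>)"
      by (simp add: emeasure_bind[OF ne K E])
    also have "\<dots> = (\<integral>\<^sup>+m. ennreal (real n) * emeasure (empirical_measure m) E \<partial>\<tau>)"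
      by (rule nn_integral_cmult[symmetric]) (rule measurable_emeasure_kernel[OF K E])
    also have "\<dots> = (\<integral>\<^sup>+m. ennreal (real (size (filter_mset (\<lambda>x. x \<in> E) m))) \<partial>\<tau>)"
      using size E by (intro nn_integral_cong) (metis size_mult_emeasure_empirical_measure)
    finally show ?thesis .
  qed
  have "intensity_measure \<tau> = measure_of UNIV (sets borel)
          (\<lambda>E. \<integral>\<^sup>+m. ennreal (real (size (filter_mset (\<lambda>x. x \<in> E) m))) \<partial>\<tau>)"
    unfolding intensity_measure_def borel_of_euclidean by simp
  also have "\<dots> = measure_of UNIV (sets borel) (emeasure ?B)"
  proof (rule measure_of_eq)
    fix E :: "'a set" assume "E \<in> sigma_sets UNIV (sets borel)"
    then have "E \<in> sets borel"
      by (metis sets.sigma_sets_eq space_borel)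
    then show "(\<integral>\<^sup>+m. ennreal (real (size (filter_mset (\<lambda>x. x \<in> E) m))) \<partial>\<tau>) = emeasure ?B E"
      by (rule count[symmetric])
  qed simp
  also have "\<dots> = ?B"
    using measure_of_of_measure[of ?B]
    by (simp add: space_scale_measure space_bind_measurable[OF K ne] sets_bind_measurable[OF K ne])
  finally show ?thesis .
qed

lemma finite_borel_measures_sym_power_topologyD:
  assumes "\<tau> \<in> finite_borel_measures (sym_power_topology (euclidean :: 'a::topological_space topology) n)"
  shows "finite_measure \<tau>" and "space \<tau> = {m. size m = n}" and "space \<tau> \<noteq> {}"
    and "empirical_measure \<in> measurable \<tau> (subprob_algebra borel)"
  using assms measurable_empirical_measure[where 'a='a and n=n]
  by (auto simp: finite_borel_measures_def topspace_sym_power_topology cong: measurable_cong_sets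
      intro: exI[of _ "replicate_mset n undefined"])

lemma intensity_measure_sym_power_eq_scale_bind:
  assumes "\<tau> \<in> finite_borel_measures (sym_power_topology (euclidean :: 'a::topological_space topology) n)"
  shows "intensity_measure \<tau> = scale_measure (ennreal (real n)) (\<tau> \<bind> empirical_measure)"
  using finite_borel_measures_sym_power_topologyD[OF assms]
  by (intro intensity_measure_eq_scale_bind) auto

lemma intensity_measure_in_finite_borel_measures:
  assumes "\<tau> \<in> finite_borel_measures (sym_power_topology (euclidean :: 'a::topological_space topology) n)"
  shows "intensity_measure \<tau> \<in> finite_borel_measures (euclidean :: 'a topology)"
proof -
  note \<tau> = finite_borel_measures_sym_power_topologyD[OF assms]
  interpret finite_measure "\<tau> \<bind> empirical_measure"
    by (rule finite_measure_bind[OF \<tau>(1,4)])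
  have "finite_measure (scale_measure (ennreal (real n)) (\<tau> \<bind> empirical_measure))"
    by (intro finite_measureI) (simp add: space_scale_measure ennreal_mult_eq_top_iff)
  then show ?thesis
    unfolding finite_borel_measures_def borel_of_euclidean
      intensity_measure_sym_power_eq_scale_bind[OF assms]
    by (simp add: space_scale_measure space_bind_measurable[OF \<tau>(4,3)]
        sets_bind_measurable[OF \<tau>(4,3)])
qed

lemma integral_intensity_measure:
  fixes f :: "'a::topological_space \<Rightarrow> real"
  assumes \<tau>: "\<tau> \<in> finite_borel_measures (sym_power_topology (euclidean :: 'a topology) n)"
    and f: "f \<in> borel_measurable borel" and B: "\<And>x. \<bar>f x\<bar> \<le> B"
  shows "integral\<^sup>L (intensity_measure \<tau>) f = (\<integral>m. (\<Sum>x\<in>#m. f x) \<partial>\<tau>)"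
proof -
  note \<tau>' = finite_borel_measures_sym_power_topologyD[OF \<tau>]
  have "f \<in> borel_measurable (\<tau> \<bind> empirical_measure)"
    using f by (simp add: measurable_cong_sets[OF sets_bind_measurable[OF \<tau>'(4,3)] refl])
  then have "integral\<^sup>L (intensity_measure \<tau>) f = real n * integral\<^sup>L (\<tau> \<bind> empirical_measure) f"
    by (simp add: intensity_measure_sym_power_eq_scale_bind[OF \<tau>] integral_scale_measure)
  also have "integral\<^sup>L (\<tau> \<bind> empirical_measure) f = (\<integral>m. integral\<^sup>L (empirical_measure m) f \<partial>\<tau>)"
  proof (rule integral_bind[OF f _ \<tau>'(4,1)])
    show "\<bar>f x\<bar> \<le> B" for x
      by (rule B)
    have "emeasure (empirical_measure m) (space (empirical_measure m)) = 1" for m :: "'a multiset"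
      by (rule prob_space.emeasure_space_1[OF prob_space_empirical_measure])
    then show "AE m in \<tau>. emeasure (empirical_measure m) (space (empirical_measure m)) \<le> ennreal 1"
      by simp
  qed
  also have "real n * (\<integral>m. integral\<^sup>L (empirical_measure m) f \<partial>\<tau>)
      = (\<integral>m. real n * integral\<^sup>L (empirical_measure m) f \<partial>\<tau>)"
    by simp
  also have "\<dots> = (\<integral>m. (\<Sum>x\<in>#m. f x) \<partial>\<tau>)"
    using \<tau>'(2) f by (intro Bochner_Integration.integral_cong) (auto simp: size_mult_integral_empirical_measure)
  finally show ?thesis .
qed

section \<open>The weak topology\<close>

lemma topspace_weak_measure_topology:
  "topspace (weak_measure_topology T) = finite_borel_measures T"
proof -
  have "bounded ((\<lambda>_. 0 :: real) ` topspace T)"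
    by (rule bounded_subset[of "{0}"]) auto
  then have "finite_borel_measures T \<in> {{M \<in> finite_borel_measures T. integral\<^sup>L M f \<in> U} | f U.
        continuous_map T euclideanreal f \<and> bounded (f ` topspace T) \<and> open U}"
    by (intro CollectI exI[of _ "\<lambda>_. 0 :: real"] exI[of _ UNIV]) auto
  then show ?thesis
    unfolding weak_measure_topology_def topology_generated_by_topspace by blast
qed

lemma continuous_map_weak_measure_topologyI:
  assumes maps: "\<And>\<tau>. \<tau> \<in> finite_borel_measures X \<Longrightarrow> \<Phi> \<tau> \<in> finite_borel_measures Y"
    and integral: "\<And>f. continuous_map Y euclideanreal f \<Longrightarrow> bounded (f ` topspace Y) \<Longrightarrow>
      \<exists>g. continuous_map X euclideanreal g \<and> bounded (g ` topspace X) \<and>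
          (\<forall>\<tau> \<in> finite_borel_measures X. integral\<^sup>L (\<Phi> \<tau>) f = integral\<^sup>L \<tau> g)"
  shows "continuous_map (weak_measure_topology X) (weak_measure_topology Y) \<Phi>"
proof -
  have "openin (weak_measure_topology X) (\<Phi> -` V \<inter> topspace (weak_measure_topology X))"
    if subbasic: "V \<in> {{M \<in> finite_borel_measures Y. integral\<^sup>L M f \<in> U} | f U.
        continuous_map Y euclideanreal f \<and> bounded (f ` topspace Y) \<and> open U}" for V
  proof -
    obtain f U where V: "V = {M \<in> finite_borel_measures Y. integral\<^sup>L M f \<in> U}" and U: "open U"
      and f: "continuous_map Y euclideanreal f" "bounded (f ` topspace Y)"
      using subbasic by blast
    obtain g where g: "continuous_map X euclideanreal g" "bounded (g ` topspace X)"
      and eq: "\<And>\<tau>. \<tau> \<in> finite_borel_measures X \<Longrightarrow> integral\<^sup>L (\<Phi> \<tau>) f = integral\<^sup>L \<tau> g"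
      using integral[OF f] by blast
    have "\<Phi> -` V \<inter> topspace (weak_measure_topology X) = {\<tau> \<in> finite_borel_measures X. integral\<^sup>L \<tau> g \<in> U}"
      using maps eq by (auto simp: V topspace_weak_measure_topology)
    then show ?thesis
      unfolding weak_measure_topology_def[of X]
      by (metis (mono_tags, lifting) topology_generated_by_Basis g U mem_Collect_eq)
  qed
  moreover have "\<Phi> ` topspace (weak_measure_topology X) \<subseteq> topspace (weak_measure_topology Y)"
    using maps by (auto simp: topspace_weak_measure_topology)
  ultimately show ?thesis
    unfolding weak_measure_topology_def[of Y] continuous_on_generated_topo_iff
    by simp
qed

theorem lemma6:
  fixes n :: nat
  shows "continuous_map
           (weak_measure_topology (sym_power_topology (euclidean :: ('a::polish_space) topology) n))
           (weak_measure_topology (euclidean :: 'a topology))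
           intensity_measure"
proof (rule continuous_map_weak_measure_topologyI)
  fix f :: "'a \<Rightarrow> real"
  assume f: "continuous_map euclidean euclideanreal f" and bounded: "bounded (f ` topspace euclidean)"
  obtain B where B: "\<And>x. \<bar>f x\<bar> \<le> B"
    using bounded by (auto simp: bounded_iff)
  have "f \<in> borel_measurable borel"
    using continuous_map_imp_borel_measurable[OF f] by (simp add: borel_of_euclidean)
  with B show "\<exists>g. continuous_map (sym_power_topology euclidean n) euclideanreal g \<and>
      bounded (g ` topspace (sym_power_topology euclidean n)) \<and>
      (\<forall>\<tau> \<in> finite_borel_measures (sym_power_topology euclidean n).
         integral\<^sup>L (intensity_measure \<tau>) f = integral\<^sup>L \<tau> g)"
    by (intro exI[of _ "\<lambda>m. \<Sum>x\<in>#m. f x"] conjI ballI continuous_map_sym_power_topology_sum_mset f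
        bounded_sym_power_topology_sum_mset bounded integral_intensity_measure)
qed (rule intensity_measure_in_finite_borel_measures)

end
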